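(* Let $N\ge 3$ and let $E\in\{E_r,E_p\}$. There exists a constant $F^*>0$, depending only on $N$ and on whether $E=E_r$ or $E=E_p$, such that for every $\delta<0$, setting $\beta^*=-F^*/\delta>0$: (i) for every $\beta\in(0,\beta^*]$, the function $\theta\mapsto E(\theta)$ is non-decreasing on $\mathbb{R}$; consequently, for every $\theta_0\in\mathbb{R}$, $\min_{\theta\ge\theta_0}E(\theta)=E(\theta_0)$; (ii) for every $\beta>\beta^*$, the function $\theta\mapsto E(\theta)$ is not monotonic on $\mathbb{R}$.
   Context: For an integer $N\ge 2$, $\delta<0$, $\beta>0$ and $\theta\in\mathbb{R}$, put $x=\beta(\theta+\delta)$; for $1\le i\le N-1$ define $u_{i,i+1}=\frac{i(N-i)}{N^2}(1+e^{-x})^{-1}$, $u_{i,i-1}=\frac{i(N-i)}{N^2}(1+e^{x})^{-1}$, $u_{i,i}=1-u_{i,i+1}-u_{i,i-1}$, $u_{i,j}=0$ for $|i-j|\ge2$; let $U=(u_{ij})_{i,j=1}^{N-1}$, $(n_{ij})_{i,j=1}^{N-1}=(I-U)^{-1}$, and $E_r(\theta)=\frac{\theta}{2}\sum_{i=1}^{N-1}(n_{1i}+n_{N-1,i})\,i$, $E_p(\theta)=\frac{\theta}{2}\sum_{i=1}^{N-1}(n_{1i}+n_{N-1,i})(N-i)$ (these depend on $N,\delta,\beta$). In applications $\theta_0$ is the minimal incentive $\frac{1}{(N-1)\beta}\log\frac{\omega}{1-\omega}-\delta$ guaranteeing a cooperation frequency of at least $\omega\in(0,1)$. *)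

theory Defs
  imports "HOL-Analysis.Analysis" "Jordan_Normal_Form.Gauss_Jordan_Elimination"
begin

text \<open>Transition probabilities u_{ij} (1-indexed, i,j in 1..N-1), with x = beta*(theta+delta).\<close>
definition trans_u :: "nat \<Rightarrow> real \<Rightarrow> real \<Rightarrow> real \<Rightarrow> nat \<Rightarrow> nat \<Rightarrow> real" where
  "trans_u N \<delta> \<beta> \<theta> i j =
     (let x = \<beta> * (\<theta> + \<delta>);
          c = real i * (real N - real i) / (real N)^2;
          up = c / (1 + exp (- x));
          down = c / (1 + exp x)
      in if j = i + 1 then up
         else if j + 1 = i then down
         else if j = i then 1 - up - down
         else 0)"

definition U_mat :: "nat \<Rightarrow> real \<Rightarrow> real \<Rightarrow> real \<Rightarrow> real mat" where
  "U_mat N \<delta> \<beta> \<theta> = mat (N - 1) (N - 1) (\<lambda>(a, b). trans_u N \<delta> \<beta> \<theta> (a + 1) (b + 1))"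

definition fund_mat :: "nat \<Rightarrow> real \<Rightarrow> real \<Rightarrow> real \<Rightarrow> real mat" where
  "fund_mat N \<delta> \<beta> \<theta> = the (mat_inverse (1\<^sub>m (N - 1) - U_mat N \<delta> \<beta> \<theta>))"

definition n_entry :: "nat \<Rightarrow> real \<Rightarrow> real \<Rightarrow> real \<Rightarrow> nat \<Rightarrow> nat \<Rightarrow> real" where
  "n_entry N \<delta> \<beta> \<theta> i j = fund_mat N \<delta> \<beta> \<theta> $$ (i - 1, j - 1)"

definition E_r :: "nat \<Rightarrow> real \<Rightarrow> real \<Rightarrow> real \<Rightarrow> real" where
  "E_r N \<delta> \<beta> \<theta> = \<theta> / 2 * (\<Sum>i = 1..N - 1.
      (n_entry N \<delta> \<beta> \<theta> 1 i + n_entry N \<delta> \<beta> \<theta> (N - 1) i) * real i)"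

definition E_p :: "nat \<Rightarrow> real \<Rightarrow> real \<Rightarrow> real \<Rightarrow> real" where
  "E_p N \<delta> \<beta> \<theta> = \<theta> / 2 * (\<Sum>i = 1..N - 1.
      (n_entry N \<delta> \<beta> \<theta> 1 i + n_entry N \<delta> \<beta> \<theta> (N - 1) i) * (real N - real i))"

end

theory Submission
  imports Defs "Jordan_Normal_Form.Determinant"
begin

(* With r = exp (-beta (theta + delta)) and S_k(r) = 1 + r + ... + r^(k-1), the sums
   n_{1i} + n_{N-1,i} have the closed form (1 + r) (S_{N-1}(r) + r^(N-1-i)) / (c_i S_N(r)):
   the row vector of these values solves v (I - U) = e_1 + e_{N-1}, and I - U is invertible
   because the three-term recurrence forces its left kernel to vanish.  Hence
   E(theta) = K theta g(beta (theta + delta)) with K > 0 and g(x) = G(exp (-x)) > 0, where G is a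
   positive combination of these closed forms, and estimates on geometric sums give
   -2 exp (-x) g <= g' <= 2 exp x g.
   With t = beta theta and D = -beta delta > 0, E is monotone iff g(x) + (x + D) g'(x) >= 0 for
   all x.  The upper bound on g' settles every x with g'(x) >= 0, and where g'(x) < 0 the
   condition reads D <= g(x) / (-g'(x)) - x.  So E is monotone exactly when D <= F, the infimum
   of these numbers; the lower bound on g' gives F >= 1/4, and F is finite since g' < 0 for
   large x. *)

definition geom :: "nat \<Rightarrow> real \<Rightarrow> real" where
  "geom n r = (\<Sum>k<n. r ^ k)"

definition geom_moment :: "nat \<Rightarrow> real \<Rightarrow> real" where
  "geom_moment n r = (\<Sum>k<n. real k * r ^ k)"

definition geom_deriv :: "nat \<Rightarrow> real \<Rightarrow> real" where
  "geom_deriv n r = (\<Sum>k<n. real k * r ^ (k - 1))"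

lemma geom_0 [simp]: "geom 0 r = 0"
  by (simp add: geom_def)

lemma geom_Suc: "geom (Suc n) r = geom n r + r ^ n"
  by (simp add: geom_def)

lemma geom_Suc_left: "geom (Suc n) r = 1 + r * geom n r"
  unfolding geom_def by (subst sum.lessThan_Suc_shift) (simp add: sum_distrib_left)

lemma geom_moment_Suc: "geom_moment (Suc n) r = geom_moment n r + real n * r ^ n"
  by (simp add: geom_moment_def)

lemma geom_deriv_Suc: "geom_deriv (Suc n) r = geom_deriv n r + real n * r ^ (n - 1)"
  by (simp add: geom_deriv_def)

lemma geom_nonneg: "r \<ge> 0 \<Longrightarrow> geom n r \<ge> 0"
  by (simp add: geom_def sum_nonneg)

lemma geom_pos: "r \<ge> 0 \<Longrightarrow> n \<ge> 1 \<Longrightarrow> geom n r > 0"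
  by (induction n) (auto simp: geom_Suc_left intro!: add_pos_nonneg mult_nonneg_nonneg geom_nonneg)

lemma geom_add: "geom (a + b) r = geom a r + r ^ a * geom b r"
  by (induction b) (auto simp: geom_Suc algebra_simps power_add)

lemma geom_mono: "r \<ge> 0 \<Longrightarrow> a \<le> b \<Longrightarrow> geom a r \<le> geom b r"
  using geom_add[of a "b - a" r] by (auto intro!: mult_nonneg_nonneg geom_nonneg)

lemma geom_at_0: "n \<ge> 1 \<Longrightarrow> geom n 0 = 1"
  by (cases n) (auto simp: geom_Suc_left)

lemma geom_deriv_at_0: "n \<ge> 2 \<Longrightarrow> geom_deriv n 0 = 1"
  by (induction n rule: nat_induct_at_least) (simp_all add: geom_deriv_def eval_nat_numeral)

lemma geom_reflect: "r \<noteq> 0 \<Longrightarrow> r ^ k * geom (Suc k) (1 / r) = geom (Suc k) r"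
proof (induction k)
  case (Suc k)
  have "r ^ Suc k * geom (Suc (Suc k)) (1 / r) = r ^ Suc k + r ^ k * (r * (1 / r)) * geom (Suc k) (1 / r)"
    by (subst geom_Suc_left) (simp add: algebra_simps)
  with Suc show ?case by (simp add: geom_Suc)
qed (simp add: geom_def)

lemma has_real_derivative_geom: "(geom n has_real_derivative geom_deriv n r) (at r)"
proof (induction n)
  case (Suc n)
  have "((\<lambda>r. geom n r + r ^ n) has_real_derivative geom_deriv n r + real n * r ^ (n - Suc 0)) (at r)"
    by (intro DERIV_add Suc DERIV_pow)
  then show ?case by (simp add: geom_Suc[abs_def] geom_deriv_Suc)
qed (simp add: geom_def[abs_def] geom_deriv_def)

lemma mult_geom_deriv: "r * geom_deriv n r = geom_moment n r"
  unfolding geom_deriv_def geom_moment_def sum_distrib_left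
  by (rule sum.cong) (auto simp: power_eq_if)

lemma geom_moment_le: "r \<ge> 0 \<Longrightarrow> geom_moment n r \<le> real n * geom n r"
  unfolding geom_moment_def geom_def sum_distrib_left by (rule sum_mono) (auto intro!: mult_right_mono)

lemma sum_diff_mult_power_eq_sum_geom: "(\<Sum>k<m. (real m - real k) * r ^ k) = (\<Sum>j<m. geom (Suc j) r)"
proof (induction m)
  case (Suc m)
  have "(\<Sum>k<Suc m. (real (Suc m) - real k) * r ^ k) = (\<Sum>k<Suc m. (real m - real k) * r ^ k + r ^ k)"
    by (rule sum.cong) (auto simp: algebra_simps)
  also have "\<dots> = (\<Sum>k<m. (real m - real k) * r ^ k) + geom (Suc m) r"
    by (simp add: sum.distrib geom_def)
  finally show ?case using Suc by simp
qed simp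

lemma mult_geom_minus_geom_moment_le:
  assumes "r \<ge> 0" "m \<le> n"
  shows "real m * geom n r - geom_moment n r \<le> (\<Sum>j<m. geom (Suc j) r)"
proof -
  have "real m * geom n r - geom_moment n r = (\<Sum>k<n. (real m - real k) * r ^ k)"
    by (simp add: geom_def geom_moment_def sum_distrib_left sum_subtractf algebra_simps)
  also have "\<dots> \<le> (\<Sum>k<n. if k < m then (real m - real k) * r ^ k else 0)"
    by (rule sum_mono) (auto intro!: mult_nonpos_nonneg simp: assms)
  also have "\<dots> = (\<Sum>k\<in>{..<n} \<inter> {k. k < m}. (real m - real k) * r ^ k)"
    by (simp add: sum.inter_restrict)
  also have "{..<n} \<inter> {k. k < m} = {..<m}" using assms(2) by auto
  finally show ?thesis by (simp add: sum_diff_mult_power_eq_sum_geom)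
qed

lemma power_mult_sum_geom_le:
  assumes "r \<ge> 0"
  shows "r ^ m * (\<Sum>j<m. geom (Suc j) r) \<le> r * (geom m r)\<^sup>2"
proof -
  have "r ^ m * (\<Sum>j<m. geom (Suc j) r) = (\<Sum>j<m. r * r ^ j * (r ^ (m - Suc j) * geom (Suc j) r))"
    unfolding sum_distrib_left
  proof (rule sum.cong)
    fix j assume "j \<in> {..<m}"
    then have "r ^ m = r * r ^ j * r ^ (m - Suc j)"
      by (metis Suc_leI lessThan_iff le_add_diff_inverse power_Suc power_add)
    then show "r ^ m * geom (Suc j) r = r * r ^ j * (r ^ (m - Suc j) * geom (Suc j) r)" by simp
  qed simp
  also have "\<dots> \<le> (\<Sum>j<m. r * r ^ j * geom m r)"
  proof (rule sum_mono)
    fix j assume "j \<in> {..<m}"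
    then have "r ^ (m - Suc j) * geom (Suc j) r \<le> geom m r"
      using geom_add[of "m - Suc j" "Suc j" r] geom_nonneg[OF assms, of "m - Suc j"] by simp
    then show "r * r ^ j * (r ^ (m - Suc j) * geom (Suc j) r) \<le> r * r ^ j * geom m r"
      by (intro mult_left_mono) (auto simp: assms)
  qed
  also have "\<dots> = r * (geom m r)\<^sup>2"
    by (simp add: geom_def sum_distrib_left sum_distrib_right power2_eq_square algebra_simps)
  finally show ?thesis .
qed

lemma geom_moment_cross_le:
  assumes r: "r \<ge> 0" and mn: "m < n"
  shows "(geom_moment n r + real m * r ^ m) * (geom n r + r ^ n)
      - (geom n r + r ^ m) * (geom_moment n r + real n * r ^ n)
    \<le> r * ((geom n r + r ^ m) * (geom n r + r ^ n))"
proof -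
  define s t where "s = geom n r" and "t = geom_moment n r"
  have s0: "s \<ge> 0" using geom_nonneg[OF r] by (simp add: s_def)
  have "(t + real m * r ^ m) * (s + r ^ n) - (s + r ^ m) * (t + real n * r ^ n)
      = r ^ n * (t - real n * s) + r ^ m * (real m * s - t) - (real n - real m) * (r ^ m * r ^ n)"
    by (simp add: algebra_simps)
  moreover have "r ^ n * (t - real n * s) \<le> 0"
    using geom_moment_le[OF r, of n] r by (auto simp: s_def t_def intro!: mult_nonneg_nonpos)
  moreover have "(real n - real m) * (r ^ m * r ^ n) \<ge> 0" using mn r by auto
  moreover have "r ^ m * (real m * s - t) \<le> r ^ m * (\<Sum>j<m. geom (Suc j) r)"
    using mult_geom_minus_geom_moment_le[OF r, of m n] mn r
    by (auto simp: s_def t_def intro!: mult_left_mono)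
  moreover have "r * (geom m r)\<^sup>2 \<le> r * s\<^sup>2"
    using geom_mono[OF r, of m n] mn geom_nonneg[OF r, of m] r
    by (auto simp: s_def intro!: mult_left_mono power_mono)
  moreover have "r * s\<^sup>2 \<le> r * ((s + r ^ m) * (s + r ^ n))"
    using r s0 by (auto intro!: mult_left_mono mult_mono simp: power2_eq_square)
  ultimately show ?thesis
    using power_mult_sum_geom_le[OF r, of m] unfolding s_def t_def by linarith
qed


text \<open>With \<open>c i = i (N - i) / N^2\<close> and \<open>r = e^(-x)\<close>, \<open>occupation (N - 1) (N - 1 - i) r / c i\<close>
  is \<open>n_{1 i} + n_{N-1, i}\<close>: the expected number of visits to state \<open>i\<close>, summed over the two
  starting states \<open>1\<close> and \<open>N - 1\<close>.\<close>

definition occupation :: "nat \<Rightarrow> nat \<Rightarrow> real \<Rightarrow> real" where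
  "occupation n m r = (1 + r) * (geom n r + r ^ m) / geom (Suc n) r"

definition occupation_deriv :: "nat \<Rightarrow> nat \<Rightarrow> real \<Rightarrow> real" where
  "occupation_deriv n m r =
     ((geom n r + r ^ m + (1 + r) * (geom_deriv n r + real m * r ^ (m - 1))) * geom (Suc n) r
      - (1 + r) * (geom n r + r ^ m) * geom_deriv (Suc n) r) / (geom (Suc n) r)\<^sup>2"

lemma has_real_derivative_occupation:
  assumes "geom (Suc n) r \<noteq> 0"
  shows "(occupation n m has_real_derivative occupation_deriv n m r) (at r)"
proof -
  have "((\<lambda>r. (1 + r) * (geom n r + r ^ m) / geom (Suc n) r) has_real_derivative
     (((0 + 1) * (geom n r + r ^ m) + (geom_deriv n r + real m * r ^ (m - Suc 0)) * (1 + r))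
        * geom (Suc n) r - (1 + r) * (geom n r + r ^ m) * geom_deriv (Suc n) r)
     / (geom (Suc n) r * geom (Suc n) r)) (at r)"
    by (intro DERIV_divide DERIV_mult DERIV_add DERIV_const DERIV_ident DERIV_pow
        has_real_derivative_geom assms)
  then show ?thesis
    by (simp add: occupation_def[abs_def] occupation_deriv_def power2_eq_square algebra_simps)
qed

lemma occupation_pos: "r \<ge> 0 \<Longrightarrow> n \<ge> 1 \<Longrightarrow> occupation n m r > 0"
  unfolding occupation_def using geom_pos[of r n] geom_pos[of r "Suc n"]
  by (auto intro!: divide_pos_pos mult_pos_pos add_pos_nonneg)

lemma occupation_deriv_le:
  assumes r: "r > 0" and mn: "m < n"
  shows "occupation_deriv n m r \<le> 2 * occupation n m r"
proof -
  define W Wd S Sd where "W = geom n r + r ^ m" and "Wd = geom_deriv n r + real m * r ^ (m - 1)"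
    and "S = geom (Suc n) r" and "Sd = geom_deriv (Suc n) r"
  have S0: "S > 0" using geom_pos[of r "Suc n"] r by (simp add: S_def)
  have W0: "W > 0" using geom_pos[of r n] r mn by (simp add: W_def add_pos_nonneg)
  have rWd: "r * Wd = geom_moment n r + real m * r ^ m"
    by (cases m) (auto simp: Wd_def algebra_simps mult_geom_deriv)
  have rSd: "r * Sd = geom_moment n r + real n * r ^ n"
    using mult_geom_deriv[of r "Suc n"] by (simp add: Sd_def geom_moment_Suc)
  have "r * (Wd * S - W * Sd) = (r * Wd) * S - W * (r * Sd)" by (simp add: algebra_simps)
  also have "\<dots> \<le> r * (W * S)"
    unfolding rWd rSd W_def S_def geom_Suc using geom_moment_cross_le[OF less_imp_le[OF r] mn] .
  finally have "r * (Wd * S - W * Sd) \<le> r * (W * S)" .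
  then have key: "Wd * S - W * Sd \<le> W * S" using r by simp
  have "occupation_deriv n m r = (W * S + (1 + r) * (Wd * S - W * Sd)) / S\<^sup>2"
    by (simp add: occupation_deriv_def W_def Wd_def S_def Sd_def algebra_simps)
  also have "\<dots> \<le> (2 * ((1 + r) * (W * S))) / S\<^sup>2"
  proof (intro divide_right_mono)
    have "W * S \<le> (1 + r) * (W * S)" using r W0 S0 by simp
    moreover have "(1 + r) * (Wd * S - W * Sd) \<le> (1 + r) * (W * S)"
      using key r by (intro mult_left_mono) auto
    ultimately show "W * S + (1 + r) * (Wd * S - W * Sd) \<le> 2 * ((1 + r) * (W * S))" by linarith
  qed simp
  also have "\<dots> = 2 * occupation n m r"
    using S0 by (simp add: occupation_def W_def S_def power2_eq_square)
  finally show ?thesis .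
qed

lemma occupation_reflect:
  assumes r: "r > 0" and mn: "m < n"
  shows "occupation n m r = occupation n (n - 1 - m) (1 / r)"
proof -
  obtain k where k: "n = Suc k" using mn by (cases n) auto
  have "r ^ k = r ^ m * r ^ (n - 1 - m)"
    using mn k by (metis diff_Suc_1 less_Suc_eq_le le_add_diff_inverse power_add)
  then have "(1 / r) ^ (n - 1 - m) = r ^ m / r ^ k"
    using r by (simp add: field_simps)
  moreover have "geom n (1 / r) = geom n r / r ^ k"
    using geom_reflect[of r k] r k by (simp add: field_simps)
  moreover have "geom (Suc n) (1 / r) = geom (Suc n) r / r ^ n"
    using geom_reflect[of r n] r by (simp add: field_simps)
  ultimately have "occupation n (n - 1 - m) (1 / r)
      = (1 + 1 / r) * (geom n r / r ^ k + r ^ m / r ^ k) / (geom (Suc n) r / (r * r ^ k))"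
    unfolding occupation_def using k by simp
  also have "\<dots> = occupation n m r"
    unfolding occupation_def using r geom_pos[of r "Suc n"] by (simp add: field_simps)
  finally show ?thesis ..
qed

text \<open>The reflection \<open>r \<mapsto> 1/r\<close>, \<open>m \<mapsto> n - 1 - m\<close> turns the upper bound on the
  derivative into a lower bound.\<close>

lemma occupation_deriv_ge:
  assumes r: "r > 0" and mn: "m < n"
  shows "r\<^sup>2 * occupation_deriv n m r \<ge> -2 * occupation n m r"
proof -
  define m' where "m' = n - 1 - m"
  have m'n: "m' < n" using mn by (auto simp: m'_def)
  have geom_ne: "geom (Suc n) y \<noteq> 0" if "y > 0" for y
    using geom_pos[of y "Suc n"] that by simp
  have "((\<lambda>y. inverse y) has_real_derivative - (inverse r ^ 2)) (at r)"
    using r DERIV_inverse[of r] by (simp add: power2_eq_square)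
  then have "((\<lambda>y. 1 / y) has_real_derivative - 1 / r\<^sup>2) (at r)"
    by (simp add: inverse_eq_divide power_one_over)
  from DERIV_chain2[OF has_real_derivative_occupation[OF geom_ne] this]
  have "((\<lambda>y. occupation n m' (1 / y)) has_real_derivative
      occupation_deriv n m' (1 / r) * (- 1 / r\<^sup>2)) (at r)"
    using r by simp
  then have "(occupation n m has_real_derivative occupation_deriv n m' (1 / r) * (- 1 / r\<^sup>2)) (at r)"
  proof (rule has_field_derivative_transform_within_open[of _ _ _ "{0<..}"])
    show "occupation n m' (1 / y) = occupation n m y" if "y \<in> {0<..}" for y
      using occupation_reflect[of y m n] that mn by (simp add: m'_def)
  qed (use r in auto)
  then have "occupation_deriv n m r = occupation_deriv n m' (1 / r) * (- 1 / r\<^sup>2)"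
    by (rule DERIV_unique[OF has_real_derivative_occupation[OF geom_ne[OF r]]])
  moreover have "occupation_deriv n m' (1 / r) \<le> 2 * occupation n m r"
    using occupation_deriv_le[of "1 / r" m' n] occupation_reflect[OF r mn] r m'n
    by (simp add: m'_def)
  ultimately show ?thesis using r by (simp add: power2_eq_square)
qed

lemma occupation_deriv_at_0_pos:
  assumes "n \<ge> 2"
  shows "occupation_deriv n m 0 > 0"
proof -
  have "occupation_deriv n m 0 = geom_deriv n 0 + real m * 0 ^ (m - 1)"
    using geom_at_0[of "Suc n"] geom_deriv_at_0[of "Suc n"] assms by (simp add: occupation_deriv_def)
  then show ?thesis using geom_deriv_at_0[OF assms] by (simp add: add_pos_nonneg)
qed

lemma isCont_geom: "isCont (geom n) x"
  using has_real_derivative_geom DERIV_isCont by blast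

lemma isCont_geom_deriv: "isCont (geom_deriv n) x"
  unfolding geom_deriv_def[abs_def] by (intro continuous_intros)

lemma isCont_occupation_deriv: "geom (Suc n) x \<noteq> 0 \<Longrightarrow> isCont (occupation_deriv n m) x"
  unfolding occupation_deriv_def[abs_def] by (intro continuous_intros isCont_geom isCont_geom_deriv) auto

definition occupation_mix :: "nat \<Rightarrow> (nat \<Rightarrow> real) \<Rightarrow> real \<Rightarrow> real" where
  "occupation_mix n f r = (\<Sum>i = 1..n. f i * occupation n (n - i) r)"

definition occupation_mix_deriv :: "nat \<Rightarrow> (nat \<Rightarrow> real) \<Rightarrow> real \<Rightarrow> real" where
  "occupation_mix_deriv n f r = (\<Sum>i = 1..n. f i * occupation_deriv n (n - i) r)"

lemma has_real_derivative_occupation_mix: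
  "geom (Suc n) r \<noteq> 0 \<Longrightarrow> (occupation_mix n f has_real_derivative occupation_mix_deriv n f r) (at r)"
  unfolding occupation_mix_def[abs_def] occupation_mix_deriv_def
  by (intro DERIV_sum DERIV_cmult has_real_derivative_occupation)

lemma occupation_mix_pos:
  fixes f :: "nat \<Rightarrow> real"
  assumes f_pos: "\<And>i. 1 \<le> i \<Longrightarrow> i \<le> n \<Longrightarrow> f i > 0" and "r \<ge> 0" "n \<ge> 1"
  shows "occupation_mix n f r > 0"
  unfolding occupation_mix_def using assms by (intro sum_pos) (auto intro!: mult_pos_pos occupation_pos)

lemma occupation_mix_deriv_le:
  fixes f :: "nat \<Rightarrow> real"
  assumes f_pos: "\<And>i. 1 \<le> i \<Longrightarrow> i \<le> n \<Longrightarrow> f i > 0" and r: "r > 0"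
  shows "occupation_mix_deriv n f r \<le> 2 * occupation_mix n f r"
  unfolding occupation_mix_def occupation_mix_deriv_def sum_distrib_left
  using f_pos occupation_deriv_le[OF r]
  by (intro sum_mono) (simp add: mult_left_mono mult.left_commute[of 2])

lemma occupation_mix_deriv_ge:
  fixes f :: "nat \<Rightarrow> real"
  assumes f_pos: "\<And>i. 1 \<le> i \<Longrightarrow> i \<le> n \<Longrightarrow> f i > 0" and r: "r > 0"
  shows "r\<^sup>2 * occupation_mix_deriv n f r \<ge> -2 * occupation_mix n f r"
  unfolding occupation_mix_def occupation_mix_deriv_def sum_distrib_left
proof (rule sum_mono)
  fix i assume i: "i \<in> {1..n}"
  then have "f i * (-2 * occupation n (n - i) r) \<le> f i * (r\<^sup>2 * occupation_deriv n (n - i) r)"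
    using f_pos[of i] occupation_deriv_ge[OF r, of "n - i" n] by (intro mult_left_mono) auto
  then show "-2 * (f i * occupation n (n - i) r) \<le> r\<^sup>2 * (f i * occupation_deriv n (n - i) r)"
    by (simp add: algebra_simps)
qed

lemma occupation_mix_deriv_pos_near_0:
  fixes f :: "nat \<Rightarrow> real"
  assumes f_pos: "\<And>i. 1 \<le> i \<Longrightarrow> i \<le> n \<Longrightarrow> f i > 0" and n: "n \<ge> 2"
  shows "\<exists>r > 0. occupation_mix_deriv n f r > 0"
proof -
  have "occupation_mix_deriv n f 0 > 0"
    unfolding occupation_mix_deriv_def using n f_pos
    by (intro sum_pos) (auto intro!: mult_pos_pos occupation_deriv_at_0_pos)
  moreover have "isCont (occupation_mix_deriv n f) 0"
    unfolding occupation_mix_deriv_def[abs_def] using geom_at_0[of "Suc n"]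
    by (intro continuous_intros isCont_occupation_deriv) auto
  ultimately obtain d where "d > 0" "\<And>x. x \<noteq> 0 \<and> \<bar>0 - x\<bar> < d \<Longrightarrow> 0 < occupation_mix_deriv n f x"
    using LIM_fun_gt_zero[of "occupation_mix_deriv n f" _ 0] unfolding isCont_def by blast
  then show ?thesis by (intro exI[of _ "d / 2"]) auto
qed

lemma mono_iff_deriv_nonneg:
  fixes h h' :: "real \<Rightarrow> real"
  assumes deriv: "\<And>t. (h has_real_derivative h' t) (at t)"
  shows "mono h \<longleftrightarrow> (\<forall>t. h' t \<ge> 0)"
proof
  assume mono: "mono h"
  show "\<forall>t. h' t \<ge> 0"
  proof (rule ccontr)
    assume "\<not> (\<forall>t. h' t \<ge> 0)"
    then obtain t where "h' t < 0" by (auto simp: not_le)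
    from DERIV_neg_dec_right[OF deriv this] obtain e
      where "e > 0" "\<And>k. k > 0 \<Longrightarrow> k < e \<Longrightarrow> h t > h (t + k)"
      by blast
    then have "h t > h (t + e / 2)" by simp
    moreover have "h t \<le> h (t + e / 2)" using mono \<open>e > 0\<close> by (auto intro: monoD)
    ultimately show False by simp
  qed
next
  assume nonneg: "\<forall>t. h' t \<ge> 0"
  show "mono h"
  proof (rule monoI)
    fix a b :: real assume "a \<le> b"
    then show "h a \<le> h b"
      by (rule DERIV_nonneg_imp_nondecreasing) (use deriv nonneg in blast)
  qed
qed

lemma exp_ge_two_mult_add: "2 * x + 1 / 2 \<le> exp (x :: real)"
proof (cases "x \<ge> 0")
  case True
  have "1 + x + x\<^sup>2 / 2 - (2 * x + 1 / 2) = (x - 1)\<^sup>2 / 2"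
    by (simp add: power2_eq_square field_simps)
  moreover have "(x - 1)\<^sup>2 / 2 \<ge> 0" by simp
  ultimately show ?thesis using exp_lower_Taylor_quadratic[OF True] by linarith
next
  case False
  then show ?thesis using exp_ge_add_one_self[of x] by linarith
qed

lemma mult_exp_le_exp_minus_one: "(t :: real) * exp (- t) \<le> exp (- 1)"
proof -
  have "t \<le> exp (t - 1)" using exp_ge_add_one_self[of "t - 1"] by simp
  then have "t * exp (- t) \<le> exp (t - 1) * exp (- t)" by (intro mult_right_mono) auto
  then show ?thesis by (simp add: exp_add[symmetric])
qed

text \<open>The key estimate is \<open>-t e\<^sup>t \<le> e\<^sup>-\<^sup>1 < 1/2\<close>.\<close>

lemma add_mult_nonneg_of_exp_bound:
  fixes g g' t x :: real
  assumes bound: "g' \<le> 2 * exp x * g" and g: "g > 0" and t: "t < 0" "x \<le> t"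
  shows "g + t * g' \<ge> 0"
proof -
  have "t * (2 * exp t * g) \<le> t * (2 * exp x * g)"
    using t g by (intro mult_left_mono_neg) auto
  also have "\<dots> \<le> t * g'" using bound t by (intro mult_left_mono_neg) auto
  finally have "t * (2 * exp t * g) \<le> t * g'" .
  moreover have "(- t) * exp t \<le> 1 / 2"
  proof -
    have "exp (- 1 :: real) \<le> 1 / 2"
      using exp_ge_add_one_self[of 1] by (simp add: exp_minus inverse_eq_divide)
    then show ?thesis using mult_exp_le_exp_minus_one[of "- t"] by simp
  qed
  then have "- g \<le> t * (2 * exp t * g)"
    using g mult_right_mono[of "(- t) * exp t" "1 / 2" g] by (simp add: algebra_simps)
  ultimately show ?thesis by linarith
qed

lemma mono_shifted_mult_iff:
  fixes g g' :: "real \<Rightarrow> real"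
  assumes deriv: "\<And>x. (g has_real_derivative g' x) (at x)"
    and pos: "\<And>x. g x > 0"
    and upper: "\<And>x. g' x \<le> 2 * exp x * g x"
    and D: "D > 0"
  shows "mono (\<lambda>t. t * g (t - D)) \<longleftrightarrow> (\<forall>x. g' x < 0 \<longrightarrow> D \<le> g x / - g' x - x)"
proof -
  have "((\<lambda>t. t * g (t - D)) has_real_derivative g (t - D) + t * g' (t - D)) (at t)" for t
  proof -
    have "((\<lambda>t. g (t - D)) has_real_derivative g' (t - D) * (1 - 0)) (at t)"
      by (rule DERIV_chain2[OF deriv DERIV_diff[OF DERIV_ident DERIV_const]])
    from DERIV_mult[OF DERIV_ident this] show ?thesis by (simp add: algebra_simps)
  qed
  then have "mono (\<lambda>t. t * g (t - D)) \<longleftrightarrow> (\<forall>t. g (t - D) + t * g' (t - D) \<ge> 0)"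
    by (rule mono_iff_deriv_nonneg)
  also have "\<dots> \<longleftrightarrow> (\<forall>x. g x + (x + D) * g' x \<ge> 0)"
  proof (intro iffI allI)
    fix x assume "\<forall>t. g (t - D) + t * g' (t - D) \<ge> 0"
    from this[rule_format, of "x + D"] show "g x + (x + D) * g' x \<ge> 0" by simp
  next
    fix t assume "\<forall>x. g x + (x + D) * g' x \<ge> 0"
    from this[rule_format, of "t - D"] show "g (t - D) + t * g' (t - D) \<ge> 0" by simp
  qed
  also have "\<dots> \<longleftrightarrow> (\<forall>x. g' x < 0 \<longrightarrow> D \<le> g x / - g' x - x)"
  proof (rule all_cong1)
    fix x
    show "g x + (x + D) * g' x \<ge> 0 \<longleftrightarrow> (g' x < 0 \<longrightarrow> D \<le> g x / - g' x - x)"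
    proof (cases "g' x < 0")
      case True
      then have "x + D \<le> g x / - g' x \<longleftrightarrow> (x + D) * (- g' x) \<le> g x"
        using pos_le_divide_eq[of "- g' x" "x + D" "g x"] by simp
      with True show ?thesis by (auto simp: algebra_simps)
    next
      case False
      have "g x + (x + D) * g' x \<ge> 0"
      proof (cases "x + D < 0")
        case True
        then show ?thesis using add_mult_nonneg_of_exp_bound[OF upper pos] D by simp
      qed (use False pos[of x] in auto)
      with False show ?thesis by simp
    qed
  qed
  finally show ?thesis .
qed

text \<open>The threshold is \<open>F = inf {g(x)/(-g'(x)) - x | g'(x) < 0}\<close>; the lower bound on \<open>g'\<close>
  gives \<open>g(x)/(-g'(x)) - x \<ge> e\<^sup>x/2 - x \<ge> 1/4\<close>, so \<open>F > 0\<close>.\<close>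

lemma mono_shifted_mult_threshold:
  fixes g g' :: "real \<Rightarrow> real"
  assumes deriv: "\<And>x. (g has_real_derivative g' x) (at x)"
    and pos: "\<And>x. g x > 0"
    and lower: "\<And>x. g' x \<ge> -2 * exp (- x) * g x"
    and upper: "\<And>x. g' x \<le> 2 * exp x * g x"
    and decreasing: "g' x\<^sub>0 < 0"
  shows "\<exists>F > 0. \<forall>D > 0. mono (\<lambda>t. t * g (t - D)) \<longleftrightarrow> D \<le> F"
proof -
  define X where "X = {x. g' x < 0}"
  define c where "c x = g x / - g' x - x" for x
  have c_ge: "c x \<ge> 1 / 4" if "x \<in> X" for x
  proof -
    have neg: "g' x < 0" using that by (simp add: X_def)
    have "exp x * (- g' x) \<le> exp x * (2 * exp (- x) * g x)"
      using lower[of x] by (intro mult_left_mono) auto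
    then have "exp x * (- g' x) \<le> 2 * g x" by (simp add: exp_minus field_simps)
    then have "exp x / 2 \<le> g x / - g' x" using neg by (simp add: field_simps)
    then show ?thesis using exp_ge_two_mult_add[of x] unfolding c_def by linarith
  qed
  have X: "X \<noteq> {}" using decreasing by (auto simp: X_def)
  have bdd: "bdd_below (c ` X)" using c_ge by (rule bdd_belowI2)
  show ?thesis
  proof (intro exI[of _ "INF x\<in>X. c x"] conjI allI impI)
    have "1 / 4 \<le> (INF x\<in>X. c x)" using X c_ge by (rule cINF_greatest)
    then show "(INF x\<in>X. c x) > 0" by linarith
    fix D :: real assume "D > 0"
    then show "mono (\<lambda>t. t * g (t - D)) \<longleftrightarrow> D \<le> (INF x\<in>X. c x)"
      unfolding mono_shifted_mult_iff[OF deriv pos upper \<open>D > 0\<close>] le_cINF_iff[OF X bdd]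
      by (simp add: X_def c_def)
  qed
qed

definition transition_rate :: "nat \<Rightarrow> nat \<Rightarrow> real" where
  "transition_rate N i = real i * (real N - real i) / (real N)\<^sup>2"

definition I_minus_U :: "nat \<Rightarrow> real \<Rightarrow> real \<Rightarrow> real \<Rightarrow> real mat" where
  "I_minus_U N \<delta> \<beta> \<theta> = 1\<^sub>m (N - 1) - U_mat N \<delta> \<beta> \<theta>"

lemma transition_rate_pos: "1 \<le> i \<Longrightarrow> i < N \<Longrightarrow> transition_rate N i > 0"
  unfolding transition_rate_def by (auto intro!: divide_pos_pos mult_pos_pos)

lemma I_minus_U_carrier: "I_minus_U N \<delta> \<beta> \<theta> \<in> carrier_mat (N - 1) (N - 1)"
  unfolding I_minus_U_def U_mat_def by auto

lemma I_minus_U_entry: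
  fixes \<delta> \<beta> \<theta> :: real
  assumes "a < N - 1" "b < N - 1"
  defines "r \<equiv> exp (- (\<beta> * (\<theta> + \<delta>)))"
  shows "I_minus_U N \<delta> \<beta> \<theta> $$ (a, b) = (if a = b then transition_rate N (a + 1) else 0)
     - (if b = a + 1 then transition_rate N (a + 1) / (1 + r) else 0)
     - (if a = b + 1 then transition_rate N (a + 1) * r / (1 + r) else 0)"
proof -
  define x c where "x = \<beta> * (\<theta> + \<delta>)" and "c = transition_rate N (a + 1)"
  have r: "r = exp (- x)" and r0: "1 + r > 0" by (simp_all add: r_def x_def add_pos_pos)
  have up: "c / (1 + exp (- x)) = c / (1 + r)" using r by simp
  have "exp (- x) * (1 + exp x) = 1 + exp (- x)" by (simp add: algebra_simps exp_minus_inverse)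
  moreover have "1 + exp x > 0" "1 + exp (- x) > 0" by (simp_all add: add_pos_pos)
  ultimately have down: "c / (1 + exp x) = c * r / (1 + r)"
    unfolding r by (simp add: field_simps)
  have "c / (1 + r) + c * r / (1 + r) = c * (1 + r) / (1 + r)"
    by (simp add: add_divide_distrib distrib_left)
  also have "\<dots> = c" using r0 by simp
  moreover have "I_minus_U N \<delta> \<beta> \<theta> $$ (a, b) = (if a = b then 1 else 0) - trans_u N \<delta> \<beta> \<theta> (a + 1) (b + 1)"
    using assms by (simp add: I_minus_U_def U_mat_def)
  ultimately show ?thesis
    unfolding trans_u_def Let_def x_def[symmetric] using up down
    by (auto simp: c_def transition_rate_def)
qed

lemma sum_mult_I_minus_U:
  fixes y :: "nat \<Rightarrow> real" and \<delta> \<beta> \<theta> :: real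
  assumes b: "b < N - 1"
    and w: "\<And>j. w j = (if 1 \<le> j \<and> j \<le> N - 1 then transition_rate N j * y (j - 1) else 0)"
  defines "r \<equiv> exp (- (\<beta> * (\<theta> + \<delta>)))"
  shows "(1 + r) * (\<Sum>a<N - 1. y a * I_minus_U N \<delta> \<beta> \<theta> $$ (a, b))
    = (1 + r) * w (b + 1) - w b - r * w (b + 2)"
proof -
  have "(\<Sum>a<N - 1. y a * I_minus_U N \<delta> \<beta> \<theta> $$ (a, b)) =
     (\<Sum>a<N - 1. (if a = b then transition_rate N (b + 1) * y b else 0)
        - (if a + 1 = b then transition_rate N b / (1 + r) * y (b - 1) else 0)
        - (if a = b + 1 then transition_rate N (b + 2) * r / (1 + r) * y (b + 1) else 0))"
    by (rule sum.cong) (use b in \<open>auto simp: I_minus_U_entry r_def\<close>)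
  also have "\<dots> = transition_rate N (b + 1) * y b
     - (\<Sum>a<N - 1. if a + 1 = b then transition_rate N b / (1 + r) * y (b - 1) else 0)
     - (if b + 1 < N - 1 then transition_rate N (b + 2) * r / (1 + r) * y (b + 1) else 0)"
    using b by (simp add: sum_subtractf)
  also have "(\<Sum>a<N - 1. if a + 1 = b then transition_rate N b / (1 + r) * y (b - 1) else 0)
      = (if 1 \<le> b then transition_rate N b / (1 + r) * y (b - 1) else 0)"
  proof (cases b)
    case (Suc b')
    then have "(\<Sum>a<N - 1. if a + 1 = b then transition_rate N b / (1 + r) * y (b - 1) else 0)
       = (\<Sum>a<N - 1. if a = b' then transition_rate N b / (1 + r) * y (b - 1) else 0)"
      by (intro sum.cong) auto
    then show ?thesis using Suc b by simp
  qed simp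
  finally have sum_eq: "(\<Sum>a<N - 1. y a * I_minus_U N \<delta> \<beta> \<theta> $$ (a, b)) = transition_rate N (b + 1) * y b
     - (if 1 \<le> b then transition_rate N b / (1 + r) * y (b - 1) else 0)
     - (if b + 1 < N - 1 then transition_rate N (b + 2) * r / (1 + r) * y (b + 1) else 0)" .
  have "1 + r > 0" by (simp add: r_def add_pos_pos)
  then have r0: "1 + r \<noteq> 0" by simp
  have "w (b + 1) = transition_rate N (b + 1) * y b" using b by (simp add: w)
  moreover have "(1 + r) * (if 1 \<le> b then transition_rate N b / (1 + r) * y (b - 1) else 0) = w b"
    using b r0 by (simp add: w)
  moreover have "(1 + r) * (if b + 1 < N - 1 then transition_rate N (b + 2) * r / (1 + r) * y (b + 1) else 0)
      = r * w (b + 2)"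
    using b r0 by (simp add: w)
  ultimately show ?thesis unfolding sum_eq by (simp only: right_diff_distrib)
qed

lemma recurrence_boundary_zero:
  fixes z :: "nat \<Rightarrow> real"
  assumes r: "r > 0" and z0: "z 0 = 0" and zn: "z (Suc n) = 0"
    and rec: "\<And>j. 1 \<le> j \<Longrightarrow> j \<le> n \<Longrightarrow> (1 + r) * z j = z (j - 1) + r * z (j + 1)"
  shows "j \<le> Suc n \<Longrightarrow> z j = 0"
proof -
  have diff: "z (j + 1) - z j = z 1 / r ^ j" if "j \<le> n" for j
    using that
  proof (induction j)
    case (Suc j)
    have "r * (z (Suc j + 1) - z (Suc j)) = z (Suc j) - z j"
      using rec[of "Suc j"] Suc.prems by (simp add: algebra_simps)
    then have "z (Suc j + 1) - z (Suc j) = (z (Suc j) - z j) / r"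
      using r by (simp add: field_simps)
    also have "\<dots> = z 1 / (r * r ^ j)" using Suc by simp
    finally show ?case by simp
  qed (simp add: z0)
  have geom_form: "z j = z 1 * geom j (1 / r)" if "j \<le> Suc n" for j
    using that
  proof (induction j)
    case (Suc j)
    then have "z (Suc j) = z 1 * geom j (1 / r) + z 1 / r ^ j" using diff[of j] by simp
    then show ?case by (simp add: geom_Suc power_one_over distrib_left)
  qed (simp add: z0)
  have "geom (Suc n) (1 / r) > 0" using r by (intro geom_pos) auto
  then have "z 1 = 0" using geom_form[of "Suc n"] zn by simp
  then show "j \<le> Suc n \<Longrightarrow> z j = 0" using geom_form[of j] by simp
qed

lemma I_minus_U_left_kernel:
  fixes y :: "real vec"
  assumes N: "N \<ge> 3" and y: "y \<in> carrier_vec (N - 1)"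
    and ker: "transpose_mat (I_minus_U N \<delta> \<beta> \<theta>) *\<^sub>v y = 0\<^sub>v (N - 1)"
  shows "y = 0\<^sub>v (N - 1)"
proof -
  define r where "r = exp (- (\<beta> * (\<theta> + \<delta>)))"
  define z where "z = (\<lambda>j. if 1 \<le> j \<and> j \<le> N - 1 then transition_rate N j * y $ (j - 1) else 0)"
  have rec: "(1 + r) * z j = z (j - 1) + r * z (j + 1)" if "1 \<le> j" "j \<le> N - 1" for j
  proof -
    have "(transpose_mat (I_minus_U N \<delta> \<beta> \<theta>) *\<^sub>v y) $ (j - 1)
        = (\<Sum>a<N - 1. y $ a * I_minus_U N \<delta> \<beta> \<theta> $$ (a, j - 1))"
      using I_minus_U_carrier[of N \<delta> \<beta> \<theta>] y that
      by (auto simp: scalar_prod_def atLeast0LessThan mult.commute intro!: sum.cong)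
    then have "(\<Sum>a<N - 1. y $ a * I_minus_U N \<delta> \<beta> \<theta> $$ (a, j - 1)) = 0"
      using ker that by simp
    moreover have "(1 + r) * (\<Sum>a<N - 1. y $ a * I_minus_U N \<delta> \<beta> \<theta> $$ (a, j - 1))
        = (1 + r) * z (j - 1 + 1) - z (j - 1) - r * z (j - 1 + 2)"
      unfolding r_def by (rule sum_mult_I_minus_U) (use that in \<open>simp_all add: z_def\<close>)
    ultimately show ?thesis using that by (simp add: numeral_2_eq_2)
  qed
  have z0: "z 0 = 0" and zn: "z (Suc (N - 1)) = 0" and r: "r > 0" by (simp_all add: z_def r_def)
  have zero: "z j = 0" if "j \<le> Suc (N - 1)" for j
    using recurrence_boundary_zero[of r z "N - 1", OF r z0 zn rec that] .
  show ?thesis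
  proof (rule eq_vecI)
    fix i assume "i < dim_vec (0\<^sub>v (N - 1))"
    then have i: "i < N - 1" by simp
    then have "transition_rate N (i + 1) * y $ i = 0" using zero[of "i + 1"] by (simp add: z_def)
    moreover have "transition_rate N (i + 1) > 0" using i by (intro transition_rate_pos) auto
    ultimately show "y $ i = 0\<^sub>v (N - 1) $ i" using i by simp
  qed (use y in simp)
qed

lemma mat_inverse_I_minus_U:
  assumes N: "N \<ge> 3"
  shows "\<exists>B. mat_inverse (I_minus_U N \<delta> \<beta> \<theta>) = Some B
    \<and> I_minus_U N \<delta> \<beta> \<theta> * B = 1\<^sub>m (N - 1) \<and> B \<in> carrier_mat (N - 1) (N - 1)"
proof -
  let ?A = "I_minus_U N \<delta> \<beta> \<theta>"
  have A: "?A \<in> carrier_mat (N - 1) (N - 1)" by (rule I_minus_U_carrier)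
  have "det (transpose_mat ?A) \<noteq> 0"
    using I_minus_U_left_kernel[OF N] det_0_iff_vec_prod_zero[of "transpose_mat ?A"] A by auto
  then have "?A \<in> Units (ring_mat TYPE(real) (N - 1) ())"
    using det_transpose[OF A] det_non_zero_imp_unit[OF A] by simp
  then obtain B where B: "mat_inverse ?A = Some B"
  proof (cases "mat_inverse ?A")
    case None
    then have "?A \<notin> Units (ring_mat TYPE(real) (N - 1) ())" by (rule mat_inverse(1)[OF A])
    with \<open>?A \<in> Units _\<close> show ?thesis by simp
  qed
  with mat_inverse(2)[OF A B] show ?thesis by blast
qed

lemma occupation_recurrence:
  assumes "m \<ge> 1"
  shows "(1 + r) * occupation n m r = occupation n (m + 1) r + r * occupation n (m - 1) r"
proof -
  have "r * r ^ (m - 1) = r ^ m" using assms by (cases m) auto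
  then have "(1 + r) * ((1 + r) * (geom n r + r ^ m))
      = (1 + r) * (geom n r + r ^ (m + 1)) + r * ((1 + r) * (geom n r + r ^ (m - 1)))"
    by (simp add: algebra_simps)
  then show ?thesis unfolding occupation_def by (simp add: add_divide_distrib[symmetric])
qed

lemma occupation_recurrence_top:
  assumes "r > 0" "n \<ge> 2"
  shows "(1 + r) * occupation n (n - 1) r - r * occupation n (n - 2) r = 1 + r"
proof -
  have S: "geom (Suc n) r > 0" using geom_pos[of r "Suc n"] assms by simp
  have "r * r ^ (n - 2) = r ^ (n - 1)" "r * r ^ (n - 1) = r ^ n"
    using assms(2) by (cases n; cases "n - 1"; auto)+
  then have "(1 + r) * ((1 + r) * (geom n r + r ^ (n - 1))) - r * ((1 + r) * (geom n r + r ^ (n - 2)))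
      = (1 + r) * geom (Suc n) r"
    by (simp add: algebra_simps geom_Suc)
  then show ?thesis using S unfolding occupation_def by (simp add: diff_divide_distrib[symmetric])
qed

lemma occupation_recurrence_bottom:
  assumes "r > 0"
  shows "(1 + r) * occupation n 0 r - occupation n 1 r = 1 + r"
proof -
  have S: "geom (Suc n) r > 0" using geom_pos[of r "Suc n"] assms by simp
  have "(1 + r) * ((1 + r) * (geom n r + 1)) - (1 + r) * (geom n r + r) = (1 + r) * geom (Suc n) r"
    by (simp add: algebra_simps geom_Suc_left)
  then show ?thesis using S unfolding occupation_def by (simp add: diff_divide_distrib[symmetric])
qed

definition occupation_row :: "nat \<Rightarrow> real \<Rightarrow> nat \<Rightarrow> real" where
  "occupation_row N r a = occupation (N - 1) (N - 1 - (a + 1)) r / transition_rate N (a + 1)"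

text \<open>The interior equations of \<open>v (I - U) = e\<^sub>1 + e\<^sub>N\<^sub>-\<^sub>1\<close> for the row vector of the
  occupations are the three-term recurrence, the two boundary equations its boundary forms.\<close>

lemma occupation_three_term:
  assumes r: "r > 0" and n: "n \<ge> 2" and c: "c < n"
    and w: "\<And>j. w j = (if 1 \<le> j \<and> j \<le> n then occupation n (n - j) r else 0)"
  shows "(1 + r) * w (c + 1) - w c - r * w (c + 2)
    = (1 + r) * ((if c = 0 then 1 else 0) + (if c = n - 1 then 1 else 0))"
proof -
  have "c = 0 \<or> c = n - 1 \<or> (1 \<le> c \<and> c + 1 < n)" using c by linarith
  then consider "c = 0" | "c = n - 1" | "1 \<le> c" "c + 1 < n" by blast
  then show ?thesis
  proof cases
    case 1
    moreover have "w c = 0" "w (c + 1) = occupation n (n - 1) r" "w (c + 2) = occupation n (n - 2) r"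
      using 1 n by (simp_all add: w numeral_2_eq_2)
    moreover have "n - 1 \<noteq> 0" using n by simp
    ultimately show ?thesis using occupation_recurrence_top[OF r n] by simp
  next
    case 2
    moreover have "w c = occupation n 1 r" "w (c + 1) = occupation n 0 r" "w (c + 2) = 0"
      using 2 n by (simp_all add: w)
    moreover have "c \<noteq> 0" using 2 n by simp
    ultimately show ?thesis using occupation_recurrence_bottom[OF r, of n] by simp
  next
    case 3
    define m where "m = n - (c + 1)"
    have "w c = occupation n (m + 1) r" "w (c + 1) = occupation n m r"
      "w (c + 2) = occupation n (m - 1) r"
      using 3 by (simp_all add: w m_def Suc_diff_Suc)
    moreover have "c \<noteq> 0" "c \<noteq> n - 1" "m \<ge> 1" using 3 by (auto simp: m_def)
    ultimately show ?thesis using occupation_recurrence[of m r n] by simp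
  qed
qed

lemma occupation_row_mult_I_minus_U:
  fixes \<delta> \<beta> \<theta> :: real
  assumes N: "N \<ge> 3" and c: "c < N - 1"
  defines "r \<equiv> exp (- (\<beta> * (\<theta> + \<delta>)))"
  shows "(\<Sum>a<N - 1. occupation_row N r a * I_minus_U N \<delta> \<beta> \<theta> $$ (a, c))
    = (if c = 0 then 1 else 0) + (if c = N - 2 then 1 else 0)"
proof -
  define n where "n = N - 1"
  define w where "w j = (if 1 \<le> j \<and> j \<le> n then occupation n (n - j) r else 0)" for j
  have r: "r > 0" by (simp add: r_def)
  have "w j = (if 1 \<le> j \<and> j \<le> N - 1 then transition_rate N j * occupation_row N r (j - 1) else 0)" for j
  proof (cases "1 \<le> j \<and> j \<le> N - 1")
    case True
    then have "j < N" by auto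
    with True have "transition_rate N j \<noteq> 0" "j - 1 + 1 = j"
      using transition_rate_pos[of j N] by auto
    with True show ?thesis by (simp add: w_def occupation_row_def n_def)
  next
    case False
    then show ?thesis by (simp only: w_def n_def if_False)
  qed
  then have "(1 + r) * (\<Sum>a<N - 1. occupation_row N r a * I_minus_U N \<delta> \<beta> \<theta> $$ (a, c))
      = (1 + r) * w (c + 1) - w c - r * w (c + 2)"
    unfolding r_def by (rule sum_mult_I_minus_U[OF c])
  also have "\<dots> = (1 + r) * ((if c = 0 then 1 else 0) + (if c = N - 2 then 1 else 0))"
  proof -
    have n: "n \<ge> 2" "c < n" "n - 1 = N - 2" using N c by (auto simp: n_def)
    then show ?thesis using occupation_three_term[OF r n(1,2) w_def] by simp
  qed
  finally have "(1 + r) * (\<Sum>a<N - 1. occupation_row N r a * I_minus_U N \<delta> \<beta> \<theta> $$ (a, c))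
      = (1 + r) * ((if c = 0 then 1 else 0) + (if c = N - 2 then 1 else 0))" .
  moreover have "1 + r \<noteq> 0" using r by simp
  ultimately show ?thesis by simp
qed

lemma fund_mat_first_plus_last_row:
  assumes N: "N \<ge> 3" and b: "b < N - 1"
  shows "fund_mat N \<delta> \<beta> \<theta> $$ (0, b) + fund_mat N \<delta> \<beta> \<theta> $$ (N - 2, b)
    = occupation_row N (exp (- (\<beta> * (\<theta> + \<delta>)))) b"
proof -
  define n r A where "n = N - 1" and "r = exp (- (\<beta> * (\<theta> + \<delta>)))" and "A = I_minus_U N \<delta> \<beta> \<theta>"
  define v where "v = occupation_row N r"
  obtain B where B: "mat_inverse A = Some B" "A * B = 1\<^sub>m n" "B \<in> carrier_mat n n"
    using mat_inverse_I_minus_U[OF N] unfolding A_def n_def by blast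
  have fund: "fund_mat N \<delta> \<beta> \<theta> = B"
    using B(1) by (simp add: fund_mat_def A_def I_minus_U_def)
  have bn: "b < n" using b by (simp add: n_def)
  have AB: "(\<Sum>c<n. A $$ (a, c) * B $$ (c, b)) = (if a = b then 1 else 0)" if "a < n" for a
  proof -
    have "(A * B) $$ (a, b) = (\<Sum>c<n. A $$ (a, c) * B $$ (c, b))"
      using I_minus_U_carrier[of N \<delta> \<beta> \<theta>] B(3) that bn
      by (auto simp: A_def n_def scalar_prod_def atLeast0LessThan intro!: sum.cong)
    then show ?thesis using B(2) that bn by simp
  qed
  have vA: "(\<Sum>a<n. v a * A $$ (a, c)) = (if c = 0 then 1 else 0) + (if c = N - 2 then 1 else 0)"
    if "c < n" for c
    using occupation_row_mult_I_minus_U[OF N, of c \<beta> \<theta> \<delta>] that by (simp add: A_def n_def r_def v_def)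
  have "(\<Sum>c<n. (\<Sum>a<n. v a * A $$ (a, c)) * B $$ (c, b))
      = (\<Sum>a<n. v a * (\<Sum>c<n. A $$ (a, c) * B $$ (c, b)))"
  proof -
    have "(\<Sum>c<n. (\<Sum>a<n. v a * A $$ (a, c)) * B $$ (c, b))
        = (\<Sum>c<n. \<Sum>a<n. v a * A $$ (a, c) * B $$ (c, b))"
      by (simp add: sum_distrib_right)
    also have "\<dots> = (\<Sum>a<n. \<Sum>c<n. v a * A $$ (a, c) * B $$ (c, b))"
      by (rule sum.swap)
    finally show ?thesis by (simp add: sum_distrib_left mult.assoc)
  qed
  also have "\<dots> = v b"
    using bn by (simp add: AB if_distrib cong: if_cong)
  finally have "v b = (\<Sum>c<n. (\<Sum>a<n. v a * A $$ (a, c)) * B $$ (c, b))" ..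
  also have "\<dots> = (\<Sum>c<n. (if c = 0 then B $$ (c, b) else 0) + (if c = N - 2 then B $$ (c, b) else 0))"
    by (rule sum.cong) (auto simp: vA)
  also have "\<dots> = B $$ (0, b) + B $$ (N - 2, b)"
    using N by (simp add: sum.distrib n_def)
  finally show ?thesis by (simp add: fund v_def r_def)
qed

lemma n_entry_first_plus_last:
  assumes N: "N \<ge> 3" and i: "1 \<le> i" "i \<le> N - 1"
  shows "n_entry N \<delta> \<beta> \<theta> 1 i + n_entry N \<delta> \<beta> \<theta> (N - 1) i
     = occupation (N - 1) (N - 1 - i) (exp (- (\<beta> * (\<theta> + \<delta>)))) / transition_rate N i"
  using fund_mat_first_plus_last_row[OF N, of "i - 1" \<delta> \<beta> \<theta>] i N
  by (simp add: n_entry_def occupation_row_def numeral_eq_Suc)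

lemma E_r_eq_occupation_mix:
  assumes N: "N \<ge> 3"
  shows "E_r N \<delta> \<beta> \<theta>
    = \<theta> * ((real N)\<^sup>2 / 2) * occupation_mix (N - 1) (\<lambda>i. 1 / (real N - real i)) (exp (- (\<beta> * (\<theta> + \<delta>))))"
proof -
  have "(n_entry N \<delta> \<beta> \<theta> 1 i + n_entry N \<delta> \<beta> \<theta> (N - 1) i) * real i
      = (real N)\<^sup>2 * (1 / (real N - real i) * occupation (N - 1) (N - 1 - i) (exp (- (\<beta> * (\<theta> + \<delta>)))))"
    if "i \<in> {1..N - 1}" for i
  proof -
    have "real i / transition_rate N i = (real N)\<^sup>2 / (real N - real i)"
      using that by (auto simp: transition_rate_def divide_simps)
    moreover have "(n_entry N \<delta> \<beta> \<theta> 1 i + n_entry N \<delta> \<beta> \<theta> (N - 1) i) * real i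
        = occupation (N - 1) (N - 1 - i) (exp (- (\<beta> * (\<theta> + \<delta>)))) * (real i / transition_rate N i)"
      using that n_entry_first_plus_last[OF N, of i] by simp
    ultimately show ?thesis by simp
  qed
  then show ?thesis
    unfolding E_r_def occupation_mix_def by (simp add: sum_distrib_left mult.assoc)
qed

lemma E_p_eq_occupation_mix:
  assumes N: "N \<ge> 3"
  shows "E_p N \<delta> \<beta> \<theta>
    = \<theta> * ((real N)\<^sup>2 / 2) * occupation_mix (N - 1) (\<lambda>i. 1 / real i) (exp (- (\<beta> * (\<theta> + \<delta>))))"
proof -
  have "(n_entry N \<delta> \<beta> \<theta> 1 i + n_entry N \<delta> \<beta> \<theta> (N - 1) i) * (real N - real i)
      = (real N)\<^sup>2 * (1 / real i * occupation (N - 1) (N - 1 - i) (exp (- (\<beta> * (\<theta> + \<delta>)))))"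
    if "i \<in> {1..N - 1}" for i
  proof -
    have "(real N - real i) / transition_rate N i = (real N)\<^sup>2 / real i"
      using that by (auto simp: transition_rate_def divide_simps)
    moreover have "(n_entry N \<delta> \<beta> \<theta> 1 i + n_entry N \<delta> \<beta> \<theta> (N - 1) i) * (real N - real i)
        = occupation (N - 1) (N - 1 - i) (exp (- (\<beta> * (\<theta> + \<delta>)))) * ((real N - real i) / transition_rate N i)"
      using that n_entry_first_plus_last[OF N, of i] by simp
    ultimately show ?thesis by simp
  qed
  then show ?thesis
    unfolding E_p_def occupation_mix_def by (simp add: sum_distrib_left mult.assoc)
qed

lemma occupation_mix_exp_threshold:
  fixes f :: "nat \<Rightarrow> real"
  assumes n: "n \<ge> 2" and f_pos: "\<And>i. 1 \<le> i \<Longrightarrow> i \<le> n \<Longrightarrow> f i > 0"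
  shows "\<exists>F > 0. \<forall>D > 0. mono (\<lambda>t. t * occupation_mix n f (exp (- (t - D)))) \<longleftrightarrow> D \<le> F"
proof -
  define g where "g x = occupation_mix n f (exp (- x))" for x
  define g' where "g' x = - exp (- x) * occupation_mix_deriv n f (exp (- x))" for x
  have deriv: "(g has_real_derivative g' x) (at x)" for x
  proof -
    have "geom (Suc n) (exp (- x)) \<noteq> 0" using geom_pos[of "exp (- x)" "Suc n"] by simp
    moreover have "((\<lambda>x. exp (- x)) has_real_derivative - exp (- x)) (at x)"
      by (auto intro!: derivative_eq_intros)
    ultimately have "((\<lambda>x. occupation_mix n f (exp (- x))) has_real_derivative
        occupation_mix_deriv n f (exp (- x)) * - exp (- x)) (at x)"
      by (rule DERIV_chain2[OF has_real_derivative_occupation_mix])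
    then show ?thesis by (simp add: g_def[abs_def] g'_def mult.commute)
  qed
  have pos: "g x > 0" for x
    unfolding g_def using n f_pos by (intro occupation_mix_pos) auto
  have lower: "g' x \<ge> -2 * exp (- x) * g x" for x
    using occupation_mix_deriv_le[OF f_pos exp_gt_zero[of "- x"]]
    by (simp add: g_def g'_def mult_left_mono)
  have upper: "g' x \<le> 2 * exp x * g x" for x
  proof -
    define r where "r = exp (- x)"
    have r: "r > 0" and ex: "exp x = 1 / r" by (simp_all add: r_def exp_minus inverse_eq_divide)
    have "-2 * occupation_mix n f r \<le> r\<^sup>2 * occupation_mix_deriv n f r"
      using occupation_mix_deriv_ge[OF f_pos r] .
    then have "- (r * occupation_mix_deriv n f r) \<le> 2 * occupation_mix n f r / r"
      using r by (simp add: field_simps power2_eq_square)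
    then show ?thesis by (simp add: g_def g'_def ex r_def[symmetric] algebra_simps)
  qed
  obtain r where r: "r > 0" "occupation_mix_deriv n f r > 0"
    using occupation_mix_deriv_pos_near_0[where f = f, OF f_pos n] by blast
  then have "g' (- ln r) < 0" by (simp add: g'_def)
  from mono_shifted_mult_threshold[OF deriv pos lower upper this] show ?thesis
    by (simp add: g_def)
qed

lemma mono_scaled_iff:
  fixes p :: "real \<Rightarrow> real"
  assumes k: "k > 0" and \<beta>: "\<beta> > 0"
  shows "mono (\<lambda>\<theta>. k * p (\<beta> * \<theta>)) \<longleftrightarrow> mono p"
proof
  assume mono: "mono (\<lambda>\<theta>. k * p (\<beta> * \<theta>))"
  show "mono p"
  proof (rule monoI)
    fix s t :: real assume "s \<le> t"
    then have "k * p (\<beta> * (s / \<beta>)) \<le> k * p (\<beta> * (t / \<beta>))"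
      using \<beta> by (intro monoD[OF mono]) (simp add: divide_right_mono)
    then show "p s \<le> p t" using k \<beta> by simp
  qed
next
  assume mono: "mono p"
  show "mono (\<lambda>\<theta>. k * p (\<beta> * \<theta>))"
  proof (rule monoI)
    fix s t :: real assume "s \<le> t"
    then have "p (\<beta> * s) \<le> p (\<beta> * t)" using \<beta> by (intro monoD[OF mono]) simp
    then show "k * p (\<beta> * s) \<le> k * p (\<beta> * t)" using k by simp
  qed
qed

text \<open>With \<open>t = \<beta>\<theta>\<close> the payoff is a positive multiple of \<open>t g(t - D)\<close> with shift \<open>D = -\<beta>\<delta>\<close>.\<close>

lemma mono_mult_rescaled_iff:
  fixes g :: "real \<Rightarrow> real"
  assumes K: "K > 0" and \<beta>: "\<beta> > 0"
  shows "mono (\<lambda>\<theta>. \<theta> * K * g (\<beta> * (\<theta> + \<delta>))) \<longleftrightarrow> mono (\<lambda>t. t * g (t - - \<beta> * \<delta>))"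
proof -
  define p where "p t = t * g (t - - \<beta> * \<delta>)" for t
  have "(\<lambda>\<theta>. \<theta> * K * g (\<beta> * (\<theta> + \<delta>))) = (\<lambda>\<theta>. (K / \<beta>) * p (\<beta> * \<theta>))"
  proof
    fix \<theta>
    have "\<beta> * \<theta> - - \<beta> * \<delta> = \<beta> * (\<theta> + \<delta>)" by (simp add: algebra_simps)
    then show "\<theta> * K * g (\<beta> * (\<theta> + \<delta>)) = (K / \<beta>) * p (\<beta> * \<theta>)" using \<beta> by (simp add: p_def)
  qed
  then show ?thesis
    using K \<beta> unfolding p_def[symmetric] by (simp only: mono_scaled_iff divide_pos_pos)
qed

lemma occupation_mix_payoff_threshold:
  fixes h :: "real \<Rightarrow> real \<Rightarrow> real \<Rightarrow> real"
  assumes n: "n \<ge> 2" and f_pos: "\<And>i. 1 \<le> i \<Longrightarrow> i \<le> n \<Longrightarrow> f i > 0" and K: "K > 0"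
    and h: "\<And>\<delta> \<beta> \<theta>. h \<delta> \<beta> \<theta> = \<theta> * K * occupation_mix n f (exp (- (\<beta> * (\<theta> + \<delta>))))"
  shows "\<exists>F > 0. \<forall>\<delta> < 0.
     (\<forall>\<beta>. 0 < \<beta> \<and> \<beta> \<le> - F / \<delta> \<longrightarrow>
        mono (h \<delta> \<beta>) \<and>
        (\<forall>\<theta>\<^sub>0. (INF \<theta>\<in>{\<theta>\<^sub>0..}. h \<delta> \<beta> \<theta>) = h \<delta> \<beta> \<theta>\<^sub>0 \<and> (\<forall>\<theta>\<ge>\<theta>\<^sub>0. h \<delta> \<beta> \<theta>\<^sub>0 \<le> h \<delta> \<beta> \<theta>))) \<and>
     (\<forall>\<beta>. \<beta> > - F / \<delta> \<longrightarrow> \<not> mono (h \<delta> \<beta>) \<and> \<not> antimono (h \<delta> \<beta>))"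
proof -
  obtain F where F: "F > 0"
    and threshold: "\<And>D. D > 0 \<Longrightarrow> mono (\<lambda>t. t * occupation_mix n f (exp (- (t - D)))) \<longleftrightarrow> D \<le> F"
    using occupation_mix_exp_threshold[of n f, OF n f_pos] by blast
  have mono_iff: "mono (h \<delta> \<beta>) \<longleftrightarrow> \<beta> \<le> - F / \<delta>" if \<delta>: "\<delta> < 0" and \<beta>: "\<beta> > 0" for \<delta> \<beta>
  proof -
    have "h \<delta> \<beta> = (\<lambda>\<theta>. \<theta> * K * occupation_mix n f (exp (- (\<beta> * (\<theta> + \<delta>)))))"
      by (simp add: h fun_eq_iff)
    then have "mono (h \<delta> \<beta>) \<longleftrightarrow> mono (\<lambda>t. t * occupation_mix n f (exp (- (t - - \<beta> * \<delta>))))"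
      using mono_mult_rescaled_iff[OF K \<beta>, of "\<lambda>x. occupation_mix n f (exp (- x))" \<delta>] by simp
    also have "\<dots> \<longleftrightarrow> - \<beta> * \<delta> \<le> F"
      using \<beta> \<delta> by (intro threshold) (simp add: mult_pos_neg)
    also have "\<dots> \<longleftrightarrow> \<beta> \<le> - F / \<delta>" using \<delta> by (auto simp: field_simps)
    finally show ?thesis .
  qed
  have not_antimono: "\<not> antimono (h \<delta> \<beta>)" for \<delta> \<beta>
  proof
    assume "antimono (h \<delta> \<beta>)"
    then have "h \<delta> \<beta> 1 \<le> h \<delta> \<beta> 0" by (rule antimonoD) simp
    moreover have "h \<delta> \<beta> 1 > 0"
      using occupation_mix_pos[OF f_pos] n K by (simp add: h)
    ultimately show False by (simp add: h)
  qed
  show ?thesis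
  proof (intro exI[of _ F] conjI allI impI F)
    fix \<delta> \<beta> :: real assume \<delta>: "\<delta> < 0" and \<beta>: "0 < \<beta> \<and> \<beta> \<le> - F / \<delta>"
    then have mono: "mono (h \<delta> \<beta>)" using mono_iff by blast
    then show "mono (h \<delta> \<beta>)" .
    fix \<theta>\<^sub>0 show "(INF \<theta>\<in>{\<theta>\<^sub>0..}. h \<delta> \<beta> \<theta>) = h \<delta> \<beta> \<theta>\<^sub>0"
      by (rule cInf_eq_minimum) (auto intro: monoD[OF mono])
    fix \<theta> assume "\<theta>\<^sub>0 \<le> \<theta>"
    then show "h \<delta> \<beta> \<theta>\<^sub>0 \<le> h \<delta> \<beta> \<theta>" by (rule monoD[OF mono])
  next
    fix \<delta> \<beta> :: real assume \<delta>: "\<delta> < 0" and \<beta>: "\<beta> > - F / \<delta>"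
    moreover have "- F / \<delta> > 0" using F \<delta> by (simp add: divide_pos_neg)
    ultimately show "\<not> mono (h \<delta> \<beta>)" using mono_iff by simp
    show "\<not> antimono (h \<delta> \<beta>)" by (rule not_antimono)
  qed
qed

theorem theorem2:
  fixes N :: nat and E :: "nat \<Rightarrow> real \<Rightarrow> real \<Rightarrow> real \<Rightarrow> real"
  assumes "N \<ge> 3"
    and "E \<in> {E_r, E_p}"
  shows "\<exists>F > 0. \<forall>\<delta> < 0.
     (\<forall>\<beta>. 0 < \<beta> \<and> \<beta> \<le> - F / \<delta> \<longrightarrow>
        mono (E N \<delta> \<beta>) \<and>
        (\<forall>\<theta>\<^sub>0. (INF \<theta>\<in>{\<theta>\<^sub>0..}. E N \<delta> \<beta> \<theta>) = E N \<delta> \<beta> \<theta>\<^sub>0 \<and> (\<forall>\<theta>\<ge>\<theta>\<^sub>0. E N \<delta> \<beta> \<theta>\<^sub>0 \<le> E N \<delta> \<beta> \<theta>))) \<and>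
     (\<forall>\<beta>. \<beta> > - F / \<delta> \<longrightarrow>
        \<not> mono (E N \<delta> \<beta>) \<and> \<not> antimono (E N \<delta> \<beta>))"
proof -
  have n: "N - 1 \<ge> 2" and K: "(real N)\<^sup>2 / 2 > 0" using assms(1) by auto
  from assms(2) consider "E = E_r" | "E = E_p" by blast
  then show ?thesis
  proof cases
    case 1
    show ?thesis unfolding 1
      by (rule occupation_mix_payoff_threshold[OF n _ K E_r_eq_occupation_mix[OF assms(1)]]) simp
  next
    case 2
    show ?thesis unfolding 2
      by (rule occupation_mix_payoff_threshold[OF n _ K E_p_eq_occupation_mix[OF assms(1)]]) simp
  qed
qed

end
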